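(* For integers $r\ge 1$ and $n\ge r+1$, $$\mathfrak{q}_{r-1}({\sf T}_n^r)=rn-r^2+1.$$
   Context: A (finite abstract) simplicial complex is a family of subsets of a finite vertex set closed under taking subsets; an $i$-face is a member of cardinality $i+1$; $S_i(K)$ is the set of $i$-faces. For an $i$-face $F$, $d_K(F)$ is the number of $(i+1)$-faces containing $F$; two distinct $i$-faces are up-neighbors if their union is an $(i+1)$-face. The signless up Laplacian $Q_i^{\mathrm{up}}(K)$ is the operator on $\mathbb{R}^{S_i(K)}$ given by $(Q_i^{\mathrm{up}}(K)f)(F)=d_K(F)f(F)+\sum_{F'\text{ up-neighbor of }F}f(F')$, and $\mathfrak{q}_i(K)$ is its largest eigenvalue. The tented complex ${\sf T}_n^r$ is the pure $r$-dimensional complex on vertex set $[n]$ whose facets are the sets $\{n\}\cup F$ with $F$ an $r$-element subset of $[n-1]$ (together with all their subsets). *)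

theory Defs
  imports Complex_Main
begin

definition simplicial_complex :: "'a set set \<Rightarrow> bool" where
  "simplicial_complex K \<longleftrightarrow> finite K \<and> (\<forall>F\<in>K. finite F) \<and> (\<forall>F\<in>K. \<forall>G. G \<subseteq> F \<longrightarrow> G \<in> K)"

definition faces :: "nat \<Rightarrow> 'a set set \<Rightarrow> 'a set set" where
  "faces i K = {F \<in> K. finite F \<and> card F = Suc i}"

definition face_degree :: "nat \<Rightarrow> 'a set set \<Rightarrow> 'a set \<Rightarrow> nat" where
  "face_degree i K F = card {G \<in> faces (Suc i) K. F \<subseteq> G}"

definition up_neighbors :: "nat \<Rightarrow> 'a set set \<Rightarrow> 'a set \<Rightarrow> 'a set set" where
  "up_neighbors i K F = {F' \<in> faces i K. F' \<noteq> F \<and> F \<union> F' \<in> faces (Suc i) K}"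

text \<open>The signless up Laplacian acting on real functions on the i-faces
  (functions are represented as maps on all sets; only values on i-faces matter).\<close>
definition Q_up :: "nat \<Rightarrow> 'a set set \<Rightarrow> ('a set \<Rightarrow> real) \<Rightarrow> 'a set \<Rightarrow> real" where
  "Q_up i K f F = real (face_degree i K F) * f F + (\<Sum>F'\<in>up_neighbors i K F. f F')"

definition Q_up_eigenvalue :: "nat \<Rightarrow> 'a set set \<Rightarrow> real \<Rightarrow> bool" where
  "Q_up_eigenvalue i K \<mu> \<longleftrightarrow>
     (\<exists>f. (\<forall>F. F \<notin> faces i K \<longrightarrow> f F = 0) \<and> (\<exists>F\<in>faces i K. f F \<noteq> 0) \<and>
          (\<forall>F\<in>faces i K. Q_up i K f F = \<mu> * f F))"

definition q_up :: "nat \<Rightarrow> 'a set set \<Rightarrow> real" where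
  "q_up i K = Max {\<mu>. Q_up_eigenvalue i K \<mu>}"

definition tented :: "nat \<Rightarrow> nat \<Rightarrow> nat set set" where
  "tented n r = {G. \<exists>F. F \<subseteq> {1..n-1} \<and> card F = r \<and> G \<subseteq> insert n F}"

end

theory Submission
  imports Defs "HOL-Library.Function_Algebras"
begin

text \<open>The degree function of the (r-1)-faces of the tented complex is a positive
  eigenvector of the signless up Laplacian. Indeed, Q f F sums, over the r-faces G containing F,
  the values of f on all (r-1)-faces of G; and in every r-face G = {n} \<union> S the facet S has
  degree 1 while each of the r facets containing n has degree n - r, so the degrees of the facets
  of G always add up to 1 + r (n - r). Since Q has nonnegative entries, an eigenvalue with a
  positive eigenvector is the largest one (a Perron-Frobenius argument: compare any eigenvector f
  with the positive one at a face where the ratio of the two is maximal in absolute value). The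
  maximum exists because eigenvectors for distinct eigenvalues are linearly independent, so there
  are only finitely many eigenvalues.\<close>

lemma (in vector_space) independent_eigenvectors:
  assumes lin: "Vector_Spaces.linear scale scale L" and "finite V"
    and nonzero: "\<And>v. v \<in> V \<Longrightarrow> v \<noteq> 0"
    and eigen: "\<And>v. v \<in> V \<Longrightarrow> L v = e v *s v"
    and inj: "inj_on e V"
  shows "independent V"
  using \<open>finite V\<close> nonzero eigen inj
proof (induction V rule: finite_induct)
  case empty
  show ?case by (rule independent_empty)
next
  case (insert a V)
  interpret L: Vector_Spaces.linear scale scale L by (fact lin)
  have indep: "independent V" using insert by simp
  have "a \<notin> span V"
  proof
    assume "a \<in> span V"
    then obtain u where a: "a = (\<Sum>v\<in>V. u v *s v)"
      using span_finite[OF insert.hyps(1)] by auto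
    have "(\<Sum>v\<in>V. u v *s (e v *s v)) = (\<Sum>v\<in>V. u v *s L v)"
      using insert.prems(2) by simp
    also have "\<dots> = L a"
      by (simp add: a L.sum L.scale)
    also have "\<dots> = e a *s a"
      using insert.prems(2) by simp
    also have "\<dots> = (\<Sum>v\<in>V. u v *s (e a *s v))"
      using a by (simp add: scale_sum_right mult.commute)
    finally have "(\<Sum>v\<in>V. (u v * (e v - e a)) *s v) = 0"
      by (simp add: algebra_simps scale_left_diff_distrib sum_subtractf)
    then have "u v * (e v - e a) = 0" if "v \<in> V" for v
      using independentD[OF indep insert.hyps(1) order_refl, of "\<lambda>v. u v * (e v - e a)"] that
      by blast
    moreover have "e v \<noteq> e a" if "v \<in> V" for v
      using insert.hyps(2) that by (intro inj_on_contraD[OF insert.prems(3)]) auto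
    ultimately have "a = 0" by (simp add: a)
    then show False using insert.prems(1) by simp
  qed
  then show ?case using indep by (rule independent_insertI)
qed

lemma (in vector_space) finite_eigenvalues:
  assumes lin: "Vector_Spaces.linear scale scale L" and "finite B"
  shows "finite {\<mu>. \<exists>v \<in> span B. v \<noteq> 0 \<and> L v = \<mu> *s v}" (is "finite ?E")
proof -
  obtain ev
    where ev: "\<And>\<mu>. \<mu> \<in> ?E \<Longrightarrow> ev \<mu> \<in> span B \<and> ev \<mu> \<noteq> 0 \<and> L (ev \<mu>) = \<mu> *s ev \<mu>"
    using bchoice[of ?E "\<lambda>\<mu> v. v \<in> span B \<and> v \<noteq> 0 \<and> L v = \<mu> *s v"] by auto
  have inj: "inj_on ev ?E"
  proof (rule inj_onI)
    fix \<mu> \<mu>' assume \<mu>: "\<mu> \<in> ?E" and \<mu>': "\<mu>' \<in> ?E" and eq: "ev \<mu> = ev \<mu>'"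
    have "\<mu> *s ev \<mu> = L (ev \<mu>')" using ev[OF \<mu>] eq by metis
    also have "\<dots> = \<mu>' *s ev \<mu>" using ev[OF \<mu>'] eq by metis
    finally show "\<mu> = \<mu>'" using ev[OF \<mu>] scale_cancel_right by blast
  qed
  have "card M \<le> card B" if M: "M \<subseteq> ?E" "finite M" for M
  proof -
    have inj_M: "inj_on ev M" using inj M(1) by (rule inj_on_subset)
    have "independent (ev ` M)"
    proof (rule independent_eigenvectors[OF lin])
      show "finite (ev ` M)" using M(2) by simp
      show "inj_on (inv_into M ev) (ev ` M)" by (rule inj_on_inv_into) simp
      fix v assume "v \<in> ev ` M"
      then obtain \<mu> where \<mu>: "\<mu> \<in> M" and v: "v = ev \<mu>" by blast
      then have "\<mu> \<in> ?E" using M(1) by blast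
      then show "v \<noteq> 0" "L v = inv_into M ev v *s v"
        unfolding v inv_into_f_f[OF inj_M \<mu>] using ev by blast+
    qed
    moreover have "ev ` M \<subseteq> span B" using ev M(1) by blast
    ultimately have "card (ev ` M) \<le> card B"
      using independent_span_bound[OF \<open>finite B\<close>] by blast
    then show ?thesis using card_image[OF inj_M] by simp
  qed
  then show ?thesis using finite_if_finite_subsets_card_bdd by blast
qed

lemma sum_fun_apply: "sum g A x = (\<Sum>a\<in>A. g a x)"
  by (induction A rule: infinite_finite_induct) auto

lemma fun_eq_sum_indicators:
  fixes f :: "'a \<Rightarrow> 'b::semiring_1"
  assumes "finite S" and "\<And>x. x \<notin> S \<Longrightarrow> f x = 0"
  shows "f = (\<Sum>s\<in>S. (\<lambda>x. f s * (if x = s then 1 else 0)))"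
proof
  fix x
  have "(\<Sum>s\<in>S. (\<lambda>x. f s * (if x = s then 1 else 0))) x = (\<Sum>s\<in>S. if x = s then f s else 0)"
    unfolding sum_fun_apply by (intro sum.cong) auto
  also have "\<dots> = f x" using assms by auto
  finally show "f x = (\<Sum>s\<in>S. (\<lambda>x. f s * (if x = s then 1 else 0))) x" ..
qed

lemma finite_faces: "finite K \<Longrightarrow> finite (faces i K)"
  by (simp add: faces_def)

lemma up_neighbors_subset_faces: "up_neighbors i K F \<subseteq> faces i K"
  by (auto simp: up_neighbors_def)

lemma Q_up_cong:
  assumes "\<And>F'. F' \<in> faces i K \<Longrightarrow> f F' = g F'" and "F \<in> faces i K"
  shows "Q_up i K f F = Q_up i K g F"
  using assms up_neighbors_subset_faces unfolding Q_up_def by (metis subsetD sum.cong)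

lemma Q_up_add: "Q_up i K (f + g) F = Q_up i K f F + Q_up i K g F"
  by (simp add: Q_up_def sum.distrib algebra_simps)

lemma Q_up_scale: "Q_up i K (\<lambda>x. c * f x) F = c * Q_up i K f F"
  by (simp add: Q_up_def sum_distrib_left algebra_simps)

lemma abs_Q_up_le: "\<bar>Q_up i K f F\<bar> \<le> Q_up i K (\<lambda>x. \<bar>f x\<bar>) F"
proof -
  have "\<bar>Q_up i K f F\<bar> \<le> \<bar>real (face_degree i K F) * f F\<bar> + \<bar>\<Sum>F'\<in>up_neighbors i K F. f F'\<bar>"
    unfolding Q_up_def by (rule abs_triangle_ineq)
  also have "\<dots> \<le> real (face_degree i K F) * \<bar>f F\<bar> + (\<Sum>F'\<in>up_neighbors i K F. \<bar>f F'\<bar>)"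
    by (simp add: abs_mult sum_abs)
  finally show ?thesis unfolding Q_up_def .
qed

lemma Q_up_mono:
  assumes "\<And>F'. F' \<in> faces i K \<Longrightarrow> f F' \<le> g F'" and "F \<in> faces i K"
  shows "Q_up i K f F \<le> Q_up i K g F"
  unfolding Q_up_def using assms up_neighbors_subset_faces[of i K F]
  by (auto intro!: add_mono mult_left_mono sum_mono)

lemma finite_Q_up_eigenvalues:
  assumes "finite K"
  shows "finite {\<mu>. Q_up_eigenvalue i K \<mu>}"
proof -
  interpret fun_space: vector_space "\<lambda>c (f :: 'a set \<Rightarrow> real) x. c * f x"
    by unfold_locales (auto simp: fun_eq_iff algebra_simps)
  define L where "L f = (\<lambda>F. if F \<in> faces i K then Q_up i K f F else 0)" for f
  define B where "B = (\<lambda>F x. if x = F then 1 else 0 :: real) ` faces i K"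
  have "Vector_Spaces.linear (\<lambda>c f x. c * f x) (\<lambda>c f x. c * f x) L"
    by (simp add: Vector_Spaces.linear_iff fun_space.vector_space_axioms L_def fun_eq_iff
        Q_up_add Q_up_scale)
  then have "finite {\<mu>. \<exists>v \<in> fun_space.span B. v \<noteq> 0 \<and> L v = (\<lambda>x. \<mu> * v x)}"
    using fun_space.finite_eigenvalues finite_faces[OF assms] B_def by blast
  moreover have "{\<mu>. Q_up_eigenvalue i K \<mu>}
      \<subseteq> {\<mu>. \<exists>v \<in> fun_space.span B. v \<noteq> 0 \<and> L v = (\<lambda>x. \<mu> * v x)}"
  proof (intro subsetI CollectI)
    fix \<mu> assume "\<mu> \<in> {\<mu>. Q_up_eigenvalue i K \<mu>}"
    then obtain f where supp: "\<And>F. F \<notin> faces i K \<Longrightarrow> f F = 0" and "\<exists>F\<in>faces i K. f F \<noteq> 0"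
      and eig: "\<And>F. F \<in> faces i K \<Longrightarrow> Q_up i K f F = \<mu> * f F"
      unfolding Q_up_eigenvalue_def by blast
    then have "f \<noteq> 0" by auto
    have "f = (\<Sum>F\<in>faces i K. (\<lambda>x. f F * (if x = F then 1 else 0)))"
      using finite_faces[OF assms] supp by (rule fun_eq_sum_indicators)
    also have "\<dots> \<in> fun_space.span B"
      unfolding B_def by (intro fun_space.span_sum fun_space.span_scale fun_space.span_base) auto
    finally have "f \<in> fun_space.span B" .
    moreover have "L f = (\<lambda>x. \<mu> * f x)"
      using supp eig by (auto simp: L_def)
    ultimately show "\<exists>v \<in> fun_space.span B. v \<noteq> 0 \<and> L v = (\<lambda>x. \<mu> * v x)"
      using \<open>f \<noteq> 0\<close> by blast
  qed
  ultimately show ?thesis by (rule finite_subset[rotated])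
qed

lemma abs_Q_up_eigenvalue_le:
  assumes "finite K"
    and pos: "\<And>F. F \<in> faces i K \<Longrightarrow> 0 < v F"
    and v_eig: "\<And>F. F \<in> faces i K \<Longrightarrow> Q_up i K v F = \<rho> * v F"
    and "Q_up_eigenvalue i K \<mu>"
  shows "\<bar>\<mu>\<bar> \<le> \<rho>"
proof -
  obtain f where "\<exists>F\<in>faces i K. f F \<noteq> 0"
    and f_eig: "\<And>F. F \<in> faces i K \<Longrightarrow> Q_up i K f F = \<mu> * f F"
    using \<open>Q_up_eigenvalue i K \<mu>\<close> unfolding Q_up_eigenvalue_def by blast
  then obtain F1 where F1: "F1 \<in> faces i K" "f F1 \<noteq> 0" by blast
  let ?ratio = "\<lambda>F. \<bar>f F\<bar> / v F"
  have fin: "finite (faces i K)" and "faces i K \<noteq> {}"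
    using finite_faces[OF \<open>finite K\<close>] F1(1) by auto
  then obtain F0 where F0: "F0 \<in> faces i K" and F0_max: "Max (?ratio ` faces i K) = ?ratio F0"
    by (rule obtains_MAX)
  have max: "?ratio F \<le> ?ratio F0" if "F \<in> faces i K" for F
    unfolding F0_max[symmetric] using fin that by simp
  define c where "c = ?ratio F0"
  have "0 < ?ratio F1" using F1 pos[OF F1(1)] by simp
  then have "0 < c" using max[OF F1(1)] unfolding c_def by linarith
  have f_F0: "\<bar>f F0\<bar> = c * v F0" using pos[OF F0] unfolding c_def by simp
  have "\<bar>\<mu>\<bar> * \<bar>f F0\<bar> = \<bar>Q_up i K f F0\<bar>" using f_eig[OF F0] by (simp add: abs_mult)
  also have "\<dots> \<le> Q_up i K (\<lambda>x. \<bar>f x\<bar>) F0" by (rule abs_Q_up_le)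
  also have "\<dots> \<le> Q_up i K (\<lambda>x. c * v x) F0"
  proof (rule Q_up_mono[OF _ F0])
    fix F assume "F \<in> faces i K"
    then show "\<bar>f F\<bar> \<le> c * v F" using max pos unfolding c_def by (simp add: divide_le_eq)
  qed
  also have "\<dots> = \<rho> * \<bar>f F0\<bar>" by (simp add: Q_up_scale v_eig[OF F0] f_F0)
  finally show ?thesis using \<open>0 < c\<close> pos[OF F0] f_F0 by simp
qed

lemma q_up_eq_positive_eigenvalue:
  assumes "finite K" and "faces i K \<noteq> {}"
    and pos: "\<And>F. F \<in> faces i K \<Longrightarrow> 0 < v F"
    and v_eig: "\<And>F. F \<in> faces i K \<Longrightarrow> Q_up i K v F = \<rho> * v F"
  shows "q_up i K = \<rho>"
proof -
  define f where "f F = (if F \<in> faces i K then v F else 0)" for F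
  have "Q_up i K f F = \<rho> * f F" if "F \<in> faces i K" for F
    using v_eig[OF that] Q_up_cong[of i K f v F] that by (simp add: f_def)
  then have "Q_up_eigenvalue i K \<rho>"
    unfolding Q_up_eigenvalue_def using assms(2) pos by (intro exI[of _ f]) (auto simp: f_def)
  moreover have "\<mu> \<le> \<rho>" if "Q_up_eigenvalue i K \<mu>" for \<mu>
    using abs_Q_up_eigenvalue_le[OF assms(1) pos v_eig that] by simp
  ultimately show ?thesis
    unfolding q_up_def by (intro Max_eqI finite_Q_up_eigenvalues[OF assms(1)]) auto
qed

lemma union_eq_coface:
  assumes F: "F \<in> faces i K" and F': "F' \<in> faces i K" and "F' \<noteq> F"
    and G: "G \<in> faces (Suc i) K" and "F \<subseteq> G" "F' \<subseteq> G"
  shows "F \<union> F' = G"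
proof (rule card_seteq)
  have fin: "finite F" "finite F'" "finite G"
    and card: "card F = Suc i" "card F' = Suc i" "card G = Suc (Suc i)"
    using F F' G by (auto simp: faces_def)
  show "finite G" by (fact fin(3))
  show "F \<union> F' \<subseteq> G" using assms by blast
  have "\<not> F' \<subseteq> F" using card_subset_eq[OF fin(1)] card \<open>F' \<noteq> F\<close> by metis
  then have "card F < card (F \<union> F')" using fin by (intro psubset_card_mono) auto
  then show "card G \<le> card (F \<union> F')" using card by simp
qed

lemma Q_up_eq_sum_cofaces:
  assumes "finite K" and F: "F \<in> faces i K"
  shows "Q_up i K f F = (\<Sum>G\<in>{G \<in> faces (Suc i) K. F \<subseteq> G}. \<Sum>F'\<in>{F' \<in> faces i K. F' \<subseteq> G}. f F')"
proof -
  let ?C = "{G \<in> faces (Suc i) K. F \<subseteq> G}"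
  let ?U = "up_neighbors i K F"
  have fin: "finite ?C" "finite ?U"
    using finite_faces[OF \<open>finite K\<close>] by (auto intro: finite_subset[OF up_neighbors_subset_faces])
  have facets: "{F' \<in> faces i K. F' \<subseteq> G} = insert F {F' \<in> ?U. F \<union> F' = G}" if G: "G \<in> ?C" for G
    using F G union_eq_coface[OF F _ _ _ _] by (auto simp: up_neighbors_def)
  have "(\<Sum>G\<in>?C. \<Sum>F'\<in>{F' \<in> faces i K. F' \<subseteq> G}. f F')
      = (\<Sum>G\<in>?C. f F + (\<Sum>F'\<in>{F' \<in> ?U. F \<union> F' = G}. f F'))"
  proof (intro sum.cong refl)
    fix G assume "G \<in> ?C"
    have "finite {F' \<in> ?U. F \<union> F' = G}" using fin(2) by simp
    moreover have "F \<notin> {F' \<in> ?U. F \<union> F' = G}" by (simp add: up_neighbors_def)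
    ultimately show "(\<Sum>F'\<in>{F' \<in> faces i K. F' \<subseteq> G}. f F')
        = f F + (\<Sum>F'\<in>{F' \<in> ?U. F \<union> F' = G}. f F')"
      by (simp add: facets[OF \<open>G \<in> ?C\<close>])
  qed
  also have "\<dots> = real (card ?C) * f F + (\<Sum>G\<in>?C. \<Sum>F'\<in>{F' \<in> ?U. F \<union> F' = G}. f F')"
    by (simp add: sum.distrib)
  also have "(\<Sum>G\<in>?C. \<Sum>F'\<in>{F' \<in> ?U. F \<union> F' = G}. f F') = (\<Sum>F'\<in>?U. f F')"
    by (rule sum.group[OF fin(2,1)]) (auto simp: up_neighbors_def)
  finally show ?thesis unfolding Q_up_def face_degree_def by simp
qed

lemma card_Suc_superset_obtains_insert:
  assumes "finite G" and "F \<subseteq> G" and "card G = Suc (card F)"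
  obtains x where "x \<notin> F" and "G = insert x F"
proof -
  have "card (G - F) = 1"
    using assms by (simp add: card_Diff_subset finite_subset)
  then obtain x where "G - F = {x}" by (auto simp: card_1_singleton_iff)
  then show thesis using that \<open>F \<subseteq> G\<close> by blast
qed

lemma face_degree_eq_card_extensions:
  assumes F: "F \<in> faces i K"
  shows "face_degree i K F = card {x. x \<notin> F \<and> insert x F \<in> K}"
proof -
  have fin: "finite F" and card: "card F = Suc i" using F by (auto simp: faces_def)
  have "{G \<in> faces (Suc i) K. F \<subseteq> G} = (\<lambda>x. insert x F) ` {x. x \<notin> F \<and> insert x F \<in> K}"
  proof (intro equalityI subsetI)
    fix G assume "G \<in> {G \<in> faces (Suc i) K. F \<subseteq> G}"
    then have "G \<in> K" "finite G" "F \<subseteq> G" "card G = Suc (card F)" by (auto simp: faces_def card)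
    then show "G \<in> (\<lambda>x. insert x F) ` {x. x \<notin> F \<and> insert x F \<in> K}"
      by (metis (mono_tags, lifting) card_Suc_superset_obtains_insert image_eqI mem_Collect_eq)
  qed (use fin card in \<open>auto simp: faces_def\<close>)
  moreover have "inj_on (\<lambda>x. insert x F) {x. x \<notin> F \<and> insert x F \<in> K}"
    by (rule inj_onI) (metis insertE insertI1 mem_Collect_eq)
  ultimately show ?thesis unfolding face_degree_def by (simp add: card_image)
qed

lemma sum_facets_of_face:
  assumes "simplicial_complex K" and G: "G \<in> faces (Suc i) K"
  shows "(\<Sum>F\<in>{F \<in> faces i K. F \<subseteq> G}. h F) = (\<Sum>y\<in>G. h (G - {y}))"
proof -
  have fin: "finite G" and card: "card G = Suc (Suc i)" and "G \<in> K" using G by (auto simp: faces_def)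
  have "{F \<in> faces i K. F \<subseteq> G} = (\<lambda>y. G - {y}) ` G"
  proof (intro equalityI subsetI)
    fix F assume "F \<in> {F \<in> faces i K. F \<subseteq> G}"
    then have "F \<subseteq> G" "card G = Suc (card F)" by (auto simp: faces_def card)
    then obtain y where "y \<notin> F" "G = insert y F" using card_Suc_superset_obtains_insert fin by metis
    then show "F \<in> (\<lambda>y. G - {y}) ` G" by blast
  next
    fix F assume "F \<in> (\<lambda>y. G - {y}) ` G"
    moreover have "G - {y} \<in> K" for y
      using \<open>simplicial_complex K\<close> \<open>G \<in> K\<close> unfolding simplicial_complex_def by blast
    ultimately show "F \<in> {F \<in> faces i K. F \<subseteq> G}" using fin card by (auto simp: faces_def)
  qed
  moreover have "inj_on (\<lambda>y. G - {y}) G" by (rule inj_onI) blast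
  ultimately show ?thesis by (simp add: sum.reindex)
qed

lemma Q_up_face_degree:
  assumes K: "simplicial_complex K"
    and c: "\<And>G. G \<in> faces (Suc i) K \<Longrightarrow> (\<Sum>y\<in>G. real (face_degree i K (G - {y}))) = c"
    and F: "F \<in> faces i K"
  shows "Q_up i K (\<lambda>F. real (face_degree i K F)) F = c * real (face_degree i K F)"
proof -
  have "finite K" using K by (simp add: simplicial_complex_def)
  have "Q_up i K (\<lambda>F. real (face_degree i K F)) F
      = (\<Sum>G\<in>{G \<in> faces (Suc i) K. F \<subseteq> G}. \<Sum>F'\<in>{F' \<in> faces i K. F' \<subseteq> G}. real (face_degree i K F'))"
    by (rule Q_up_eq_sum_cofaces[OF \<open>finite K\<close> F])
  also have "\<dots> = (\<Sum>G\<in>{G \<in> faces (Suc i) K. F \<subseteq> G}. c)"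
    using sum_facets_of_face[OF K] c by (intro sum.cong) auto
  also have "\<dots> = c * real (face_degree i K F)"
    by (simp add: face_degree_def)
  finally show ?thesis .
qed

lemma simplicial_complex_tented: "simplicial_complex (tented n r)"
proof -
  have "tented n r \<subseteq> Pow (insert n {1..n-1})" by (auto simp: tented_def)
  then have "finite (tented n r)" and "\<forall>F \<in> tented n r. finite F"
    by (auto intro: finite_subset dest: finite_subset[of _ "insert n {1..n-1}"])
  moreover have "\<forall>F \<in> tented n r. \<forall>G. G \<subseteq> F \<longrightarrow> G \<in> tented n r"
    by (auto simp: tented_def)
  ultimately show ?thesis unfolding simplicial_complex_def by blast
qed

lemma tented_iff:
  assumes "r < n"
  shows "G \<in> tented n r \<longleftrightarrow> G \<subseteq> {1..n} \<and> card (G - {n}) \<le> r"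
proof
  assume "G \<in> tented n r"
  then obtain F where F: "F \<subseteq> {1..n-1}" "card F = r" "G \<subseteq> insert n F" by (auto simp: tented_def)
  then have "card (G - {n}) \<le> card F" by (intro card_mono) (auto intro: finite_subset)
  moreover have "insert n F \<subseteq> {1..n}" using F(1) assms by fastforce
  ultimately show "G \<subseteq> {1..n} \<and> card (G - {n}) \<le> r" using F by blast
next
  assume G: "G \<subseteq> {1..n} \<and> card (G - {n}) \<le> r"
  then have "G - {n} \<subseteq> {1..n-1}" by auto
  moreover have "r \<le> card {1..n-1}" using assms by simp
  ultimately obtain F where "G - {n} \<subseteq> F" "F \<subseteq> {1..n-1}" "card F = r"
    using exists_subset_between[of "G - {n}" r "{1..n-1}"] G by auto
  then show "G \<in> tented n r" unfolding tented_def by blast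
qed

lemma faces_tented:
  assumes "r < n"
  shows "F \<in> faces i (tented n r) \<longleftrightarrow> F \<subseteq> {1..n} \<and> card F = Suc i \<and> card (F - {n}) \<le> r"
  using assms by (auto simp: faces_def tented_iff intro: finite_subset)

lemma face_degree_tented:
  assumes "0 < r" and "r < n" and F: "F \<in> faces (r - 1) (tented n r)"
  shows "face_degree (r - 1) (tented n r) F = (if n \<in> F then n - r else 1)"
proof -
  have sub: "F \<subseteq> {1..n}" and card: "card F = r" and fin: "finite F"
    using F assms by (auto simp: faces_tented intro: finite_subset)
  let ?X = "{x. x \<notin> F \<and> insert x F \<in> tented n r}"
  show ?thesis
  proof (cases "n \<in> F")
    case True
    have "card (insert x F - {n}) = card (F - {n}) + 1" if "x \<notin> F" for x
    proof -
      have "insert x F - {n} = insert x (F - {n})" using that True by blast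
      then show ?thesis using that fin by simp
    qed
    then have "?X = {1..n} - F"
      using True card fin sub \<open>0 < r\<close> by (auto simp: tented_iff[OF \<open>r < n\<close>])
    then show ?thesis
      using True sub card fin face_degree_eq_card_extensions[OF F] by (simp add: card_Diff_subset)
  next
    case False
    have "?X = {n}"
    proof (intro equalityI subsetI)
      fix x assume "x \<in> ?X"
      then have "x \<notin> F" "card (insert x F - {n}) \<le> r" by (auto simp: tented_iff[OF \<open>r < n\<close>])
      then show "x \<in> {n}" using False fin card by (cases "x = n") auto
    next
      fix x assume "x \<in> {n}"
      then show "x \<in> ?X" using False card sub \<open>r < n\<close> by (auto simp: tented_iff[OF \<open>r < n\<close>])
    qed
    then show ?thesis
      using False face_degree_eq_card_extensions[OF F] by simp
  qed
qed

lemma sum_face_degree_facet_tented: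
  assumes "0 < r" and "r < n" and G: "G \<in> faces r (tented n r)"
  shows "(\<Sum>y\<in>G. real (face_degree (r - 1) (tented n r) (G - {y}))) = real (r * (n - r) + 1)"
proof -
  have sub: "G \<subseteq> {1..n}" and card: "card G = Suc r" and "card (G - {n}) \<le> r"
    and fin: "finite G"
    using G assms by (auto simp: faces_tented intro: finite_subset)
  have "n \<in> G"
  proof (rule ccontr)
    assume "n \<notin> G"
    then have "card (G - {n}) = Suc r" using card by simp
    then show False using \<open>card (G - {n}) \<le> r\<close> by simp
  qed
  then have card_n: "card (G - {n}) = r" using card fin by simp
  have facet: "G - {y} \<in> faces (r - 1) (tented n r)" if "y \<in> G" for y
  proof -
    have "card (G - {y}) = Suc (r - 1)" using that card fin assms by simp
    moreover have "card (G - {y} - {n}) \<le> card (G - {y})" using fin by (intro card_mono) auto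
    ultimately show ?thesis using sub assms by (auto simp: faces_tented)
  qed
  have "(\<Sum>y\<in>G. real (face_degree (r - 1) (tented n r) (G - {y})))
      = real (face_degree (r - 1) (tented n r) (G - {n}))
        + (\<Sum>y\<in>G - {n}. real (face_degree (r - 1) (tented n r) (G - {y})))"
    using \<open>n \<in> G\<close> fin by (simp add: sum.remove)
  also have "\<dots> = 1 + (\<Sum>y\<in>G - {n}. real (n - r))"
  proof -
    have "face_degree (r - 1) (tented n r) (G - {n}) = 1"
      using face_degree_tented[OF assms(1,2) facet[OF \<open>n \<in> G\<close>]] by simp
    moreover have "face_degree (r - 1) (tented n r) (G - {y}) = n - r" if "y \<in> G - {n}" for y
      using face_degree_tented[OF assms(1,2) facet[of y]] that \<open>n \<in> G\<close> by auto
    ultimately show ?thesis by simp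
  qed
  also have "\<dots> = real (r * (n - r) + 1)"
    using card_n by simp
  finally show ?thesis .
qed

theorem mainTheorem5:
  fixes r n :: nat
  assumes "r \<ge> 1" and "n \<ge> r + 1"
  shows "q_up (r - 1) (tented n r) = real r * real n - (real r)^2 + 1"
proof -
  have "0 < r" "r < n" and Suc_r: "Suc (r - 1) = r" using assms by auto
  have K: "simplicial_complex (tented n r)" by (rule simplicial_complex_tented)
  have "{1..r} \<in> faces (r - 1) (tented n r)"
    using \<open>r < n\<close> Suc_r by (simp add: faces_tented)
  have "q_up (r - 1) (tented n r) = real (r * (n - r) + 1)"
  proof (rule q_up_eq_positive_eigenvalue)
    show "finite (tented n r)" using K by (simp add: simplicial_complex_def)
    show "faces (r - 1) (tented n r) \<noteq> {}" using \<open>{1..r} \<in> _\<close> by blast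
    show "0 < real (face_degree (r - 1) (tented n r) F)" if "F \<in> faces (r - 1) (tented n r)" for F
      using face_degree_tented[OF \<open>0 < r\<close> \<open>r < n\<close> that] \<open>r < n\<close> by simp
    show "Q_up (r - 1) (tented n r) (\<lambda>F. real (face_degree (r - 1) (tented n r) F)) F
        = real (r * (n - r) + 1) * real (face_degree (r - 1) (tented n r) F)"
      if "F \<in> faces (r - 1) (tented n r)" for F
      using Q_up_face_degree[OF K _ that] sum_face_degree_facet_tented[OF \<open>0 < r\<close> \<open>r < n\<close>]
      unfolding Suc_r by blast
  qed
  then show ?thesis using assms by (simp add: of_nat_diff power2_eq_square algebra_simps)
qed

end
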